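(* Let $c\in\mathbb{R}$ and let $\mathcal{C}$ be the $\sigma$-algebra of Borel subsets of $\mathbb{R}$ that are symmetric with respect to $c$ (i.e. $B\in\mathcal{C}$ iff $B$ is Borel and $x\in B\Leftrightarrow 2c-x\in B$). Consider the statistical model $(\mathbb{R},\mathcal{C},\{N(\theta,1)\}_{\theta\in\mathbb{R}})$, where $N(\theta,1)$ is the Gaussian law with mean $\theta$ and variance $1$ restricted to $\mathcal{C}$. Let $\lambda_1\geq 0$, $\theta_1=c-\lambda_1$, $\theta_2=c+\lambda_1$, $\Theta_1=\,]-\infty,\theta_1[\,\cup\,]\theta_2,+\infty[$ and $\Theta_0=[\theta_1,\theta_2]$. Then the experts for the choice between $\Theta_1$ and $\Theta_0$ are exactly the $\mathcal{C}$-measurable decision rules with values in $\{0,1\}$ which are almost surely of the form $g_t(x)=\mathbf{1}_{[t,+\infty[}(|x-c|)$ for some $t\in\overline{\mathbb{R}^+}=[0,+\infty]$.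
   Context: Given a statistical model $(\Omega,\mathcal{A},(\mathbb{P}_\theta)_{\theta\in\Theta})$ whose laws have strictly positive densities with respect to a common measure, and a partition $\Theta=\Theta_0\cup\Theta_1$, an $\mathcal{A}$-measurable decision rule $\phi:\Omega\to\{0,1\}$ (value $d$ meaning "decide $\theta\in\Theta_d$") is an expert for the choice between $\Theta_0$ and $\Theta_1$ if for every $(\theta_0,\theta_1)\in\Theta_0\times\Theta_1$ and every non-negligible event $C\in\mathcal{A}$, $$\frac{\mathbb{P}_{\theta_1}(C\cap\{\phi=1\})}{\mathbb{P}_{\theta_1}(C)}\;\geq\;\frac{\mathbb{P}_{\theta_0}(C\cap\{\phi=1\})}{\mathbb{P}_{\theta_0}(C)}.$$ Here $\mathcal{A}=\mathcal{C}$, so only symmetric events $C$ are used; "almost surely" refers to Lebesgue-null sets. *)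

theory Defs
  imports "HOL-Probability.Probability"
begin

definition decision_rule :: "'a measure \<Rightarrow> ('a \<Rightarrow> nat) \<Rightarrow> bool" where
  "decision_rule M \<phi> \<longleftrightarrow>
     \<phi> \<in> measurable M (count_space UNIV) \<and> (\<forall>x\<in>space M. \<phi> x \<in> {0, 1})"

text \<open>Expert for the choice between Theta0 and Theta1 (value d means: decide theta in Theta_d).
  mu is the common dominating measure on M, defining negligible events.\<close>
definition expert ::
  "'a measure \<Rightarrow> 'a measure \<Rightarrow> ('t \<Rightarrow> 'a measure) \<Rightarrow> 't set \<Rightarrow> 't set \<Rightarrow> ('a \<Rightarrow> nat) \<Rightarrow> bool" where
  "expert M \<mu> P \<Theta>0 \<Theta>1 \<phi> \<longleftrightarrow> decision_rule M \<phi> \<and>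
     (\<forall>\<theta>0\<in>\<Theta>0. \<forall>\<theta>1\<in>\<Theta>1. \<forall>C\<in>sets M. emeasure \<mu> C \<noteq> 0 \<longrightarrow>
        measure (P \<theta>1) (C \<inter> {x\<in>space M. \<phi> x = 1}) / measure (P \<theta>1) C
        \<ge> measure (P \<theta>0) (C \<inter> {x\<in>space M. \<phi> x = 1}) / measure (P \<theta>0) C)"

definition sym_sets :: "real \<Rightarrow> real set set" where
  "sym_sets c = {B \<in> sets borel. \<forall>x. x \<in> B \<longleftrightarrow> 2 * c - x \<in> B}"

definition sym_space :: "real \<Rightarrow> real measure" where
  "sym_space c = sigma UNIV (sym_sets c)"

definition gauss_sym :: "real \<Rightarrow> real \<Rightarrow> real measure" where
  "gauss_sym c \<theta> = measure_of UNIV (sym_sets c) (emeasure (density lborel (normal_density \<theta> 1)))"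

definition leb_sym :: "real \<Rightarrow> real measure" where
  "leb_sym c = measure_of UNIV (sym_sets c) (emeasure lborel)"

definition g_rule :: "real \<Rightarrow> ereal \<Rightarrow> real \<Rightarrow> nat" where
  "g_rule c t x = (if t \<le> ereal \<bar>x - c\<bar> then 1 else 0)"

end

theory Submission
  imports Defs
begin

(* On a symmetric event the law N(theta,1) cannot be told apart from its mirror image
   N(2c - theta,1), so it acts through the symmetrised density
     h_theta(x) = (N(theta,1) + N(2c - theta,1))(x) / 2
                = N(c,1)(x) exp(-(theta - c)^2/2) cosh((theta - c)(x - c)).
   Since cosh(a u) cosh(b v) <= cosh(a v) cosh(b u) for |b| <= |a|, |u| <= |v|, the likelihood ratio
   h_theta1 / h_theta0 is a nondecreasing function of |x - c| whenever |theta0 - c| <= |theta1 - c|,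
   and a strictly increasing one when theta0 = c <> theta1.
   Monotone likelihood ratio makes every threshold rule g_t an expert: with K the ratio at distance t
   from c, the ratio is >= K where g_t accepts and <= K where it rejects, and comparing both parts
   of C with K gives the expert inequality. Conversely, if for an expert some level s left both {|x - c| < s, phi = 1} and
   {|x - c| > s, phi = 0} non-null, the union of the two would violate the expert inequality for
   theta0 = c; hence phi agrees almost everywhere with the threshold rule at
   t = sup {s. {|x - c| < s, phi = 1} is null}. *)

lemma emeasure_measure_of_subalgebra:
  assumes "sigma_algebra (space N) A" "A \<subseteq> sets N" "S \<in> A"
  shows "emeasure (measure_of (space N) A (emeasure N)) S = emeasure N S"
proof (rule emeasure_measure_of_sigma[OF assms(1) _ _ assms(3)])
  show "positive A (emeasure N)"
    by (simp add: positive_def)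
  show "countably_additive A (emeasure N)"
    using assms(2) by (auto simp: countably_additive_def intro: suminf_emeasure)
qed

lemma set_integral_nonneg:
  fixes f :: "'a \<Rightarrow> real"
  assumes "\<And>x. x \<in> A \<Longrightarrow> 0 \<le> f x"
  shows "0 \<le> (LINT x:A|M. f x)"
  unfolding set_lebesgue_integral_def
  by (rule Bochner_Integration.integral_nonneg) (simp add: assms indicator_def)

lemma set_integral_pos:
  fixes f :: "'a \<Rightarrow> real"
  assumes A: "A \<in> sets M" "emeasure M A \<noteq> 0" and f: "set_integrable M A f" "\<And>x. x \<in> A \<Longrightarrow> 0 < f x"
  shows "0 < (LINT x:A|M. f x)"
proof -
  have nonneg: "AE x in M. 0 \<le> indicator A x * f x"
    using f(2) by (intro AE_I2) (simp add: indicator_def less_imp_le)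
  have "(LINT x:A|M. f x) \<noteq> 0"
  proof
    assume "(LINT x:A|M. f x) = 0"
    then have "AE x in M. indicator A x * f x = 0"
      using integral_nonneg_eq_0_iff_AE[OF _ nonneg] f(1)
      by (simp add: set_lebesgue_integral_def set_integrable_def)
    then have "AE x in M. x \<notin> A"
      by eventually_elim (use f(2) in \<open>fastforce simp: indicator_def\<close>)
    then show False
      using AE_iff_measurable[of A M "\<lambda>x. x \<notin> A"] A sets.sets_into_space by auto
  qed
  then show ?thesis
    using set_integral_nonneg[of A f M] f(2) by (simp add: less_imp_le)
qed

lemma set_integral_cross_le:
  fixes f0 f1 :: "'a \<Rightarrow> real"
  assumes integrable: "set_integrable M A f0" "set_integrable M A f1"
      "set_integrable M B f0" "set_integrable M B f1"
    and nonneg: "\<And>x. 0 \<le> f0 x"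
    and above: "AE x \<in> A in M. K * f0 x \<le> f1 x"
    and below: "AE x \<in> B in M. f1 x \<le> K * f0 x"
  shows "(LINT x:A|M. f0 x) * (LINT x:B|M. f1 x) \<le> (LINT x:A|M. f1 x) * (LINT x:B|M. f0 x)"
proof -
  have A: "K * (LINT x:A|M. f0 x) \<le> (LINT x:A|M. f1 x)"
    using set_integral_mono_AE[OF _ integrable(2) above] integrable(1) by simp
  have B: "(LINT x:B|M. f1 x) \<le> K * (LINT x:B|M. f0 x)"
    using set_integral_mono_AE[OF integrable(4) _ below] integrable(3) by simp
  have "(LINT x:A|M. f0 x) * (LINT x:B|M. f1 x) \<le> (LINT x:A|M. f0 x) * (K * (LINT x:B|M. f0 x))"
    using B set_integral_nonneg[of A f0 M] nonneg by (simp add: mult_left_mono)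
  also have "\<dots> = (K * (LINT x:A|M. f0 x)) * (LINT x:B|M. f0 x)"
    by simp
  also have "\<dots> \<le> (LINT x:A|M. f1 x) * (LINT x:B|M. f0 x)"
    using A set_integral_nonneg[of B f0 M] nonneg by (simp add: mult_right_mono)
  finally show ?thesis .
qed

lemma set_integral_cross_less:
  fixes f0 f1 :: "'a \<Rightarrow> real"
  assumes integrable: "set_integrable M A f0" "set_integrable M A f1"
      "set_integrable M B f0" "set_integrable M B f1"
    and nonneg: "\<And>x. 0 \<le> f0 x" and A_pos: "0 < (LINT x:A|M. f0 x)"
    and B: "B \<in> sets M" "emeasure M B \<noteq> 0"
    and below: "AE x \<in> A in M. f1 x \<le> K * f0 x"
    and above: "\<And>x. x \<in> B \<Longrightarrow> K * f0 x < f1 x"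
  shows "(LINT x:A|M. f1 x) * (LINT x:B|M. f0 x) < (LINT x:A|M. f0 x) * (LINT x:B|M. f1 x)"
proof -
  have A: "(LINT x:A|M. f1 x) \<le> K * (LINT x:A|M. f0 x)"
    using set_integral_mono_AE[OF integrable(2) _ below] integrable(1) by simp
  have "0 < (LINT x:B|M. f1 x - K * f0 x)"
    using B integrable(3,4) above by (intro set_integral_pos) auto
  then have B: "K * (LINT x:B|M. f0 x) < (LINT x:B|M. f1 x)"
    using integrable(3,4) by simp
  have "(LINT x:A|M. f1 x) * (LINT x:B|M. f0 x) \<le> (K * (LINT x:A|M. f0 x)) * (LINT x:B|M. f0 x)"
    using A set_integral_nonneg[of B f0 M] nonneg by (simp add: mult_right_mono)
  also have "\<dots> = (LINT x:A|M. f0 x) * (K * (LINT x:B|M. f0 x))"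
    by simp
  also have "\<dots> < (LINT x:A|M. f0 x) * (LINT x:B|M. f1 x)"
    using B A_pos by (rule mult_strict_left_mono)
  finally show ?thesis .
qed

lemma divide_add_le_divide_add_iff:
  fixes a0 b0 a1 b1 :: real
  assumes "0 < a0 + b0" "0 < a1 + b1"
  shows "a0 / (a0 + b0) \<le> a1 / (a1 + b1) \<longleftrightarrow> a0 * b1 \<le> a1 * b0"
proof -
  have "a0 / (a0 + b0) \<le> a1 / (a1 + b1) \<longleftrightarrow> a0 * (a1 + b1) \<le> a1 * (a0 + b0)"
    using assms by (simp add: divide_le_eq le_divide_eq mult.commute)
  then show ?thesis
    by (simp add: algebra_simps)
qed

lemma cosh_mult_abs: "cosh (x * y) = cosh (\<bar>x\<bar> * \<bar>y\<bar>)" for x y :: real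
  by (simp only: abs_mult[symmetric] cosh_real_abs)

lemma cosh_mult_cosh_le_swap:
  fixes a b u v :: real
  assumes "\<bar>b\<bar> \<le> \<bar>a\<bar>" "\<bar>u\<bar> \<le> \<bar>v\<bar>"
  shows "cosh (a * u) * cosh (b * v) \<le> cosh (a * v) * cosh (b * u)"
proof -
  define A B U V where "A = \<bar>a\<bar>" "B = \<bar>b\<bar>" "U = \<bar>u\<bar>" "V = \<bar>v\<bar>"
  have nonneg: "0 \<le> B" "B \<le> A" "0 \<le> U" "U \<le> V"
    using assms by (auto simp: A_B_U_V_def)
  have "A * U + B * V \<le> A * V + B * U"
    using mult_nonneg_nonneg[of "A - B" "V - U"] nonneg by (simp add: algebra_simps)
  then have sum: "cosh (A * U + B * V) \<le> cosh (A * V + B * U)"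
    using nonneg by (simp add: cosh_real_nonneg_le_iff)
  have "(A * U - B * V)\<^sup>2 \<le> (A * V - B * U)\<^sup>2"
    using mult_nonneg_nonneg[of "A * A - B * B" "V * V - U * U"] nonneg
      mult_mono[of B A B A] mult_mono[of U V U V]
    by (simp add: power2_eq_square algebra_simps)
  then have "\<bar>A * U - B * V\<bar> \<le> \<bar>A * V - B * U\<bar>"
    by (simp add: abs_le_square_iff)
  then have diff: "cosh (A * U - B * V) \<le> cosh (A * V - B * U)"
    using cosh_real_nonneg_le_iff[of "\<bar>A * U - B * V\<bar>" "\<bar>A * V - B * U\<bar>"] by simp
  have "2 * (cosh x * cosh y) = cosh (x + y) + cosh (x - y)" for x y :: real
    by (simp add: cosh_add cosh_diff)
  then have "2 * (cosh (A * U) * cosh (B * V)) \<le> 2 * (cosh (A * V) * cosh (B * U))"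
    using add_mono[OF sum diff] by simp
  then show ?thesis
    by (simp add: cosh_mult_abs[of a] cosh_mult_abs[of b] A_B_U_V_def)
qed

lemma sigma_algebra_sym_sets: "sigma_algebra UNIV (sym_sets c)"
  unfolding sigma_algebra_iff2
proof (intro conjI allI ballI impI)
  show "sym_sets c \<subseteq> Pow UNIV" "{} \<in> sym_sets c"
    by (auto simp: sym_sets_def)
next
  fix S assume "S \<in> sym_sets c"
  then show "UNIV - S \<in> sym_sets c"
    by (auto simp: sym_sets_def)
next
  fix A :: "nat \<Rightarrow> real set" assume "range A \<subseteq> sym_sets c"
  then show "(\<Union>i. A i) \<in> sym_sets c"
    by (auto simp: sym_sets_def)
qed

lemma sets_sym_space: "sets (sym_space c) = sym_sets c"
  unfolding sym_space_def by (simp add: sigma_algebra.sigma_sets_eq[OF sigma_algebra_sym_sets])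

lemma space_sym_space [simp]: "space (sym_space c) = UNIV"
  unfolding sym_space_def by simp

lemma sym_sets_subset_borel: "sym_sets c \<subseteq> sets borel"
  by (auto simp: sym_sets_def)

lemma sets_sym_space_borel: "S \<in> sets (sym_space c) \<Longrightarrow> S \<in> sets borel"
  using sym_sets_subset_borel by (auto simp: sets_sym_space)

lemma sets_sym_space_reflect: "S \<in> sets (sym_space c) \<Longrightarrow> 2 * c - x \<in> S \<longleftrightarrow> x \<in> S"
  by (simp add: sets_sym_space sym_sets_def)

lemma sets_sym_space_abs_dist:
  assumes "{x. P \<bar>x - c\<bar>} \<in> sets borel"
  shows "{x. P \<bar>x - c\<bar>} \<in> sets (sym_space c)"
proof -
  have "\<bar>(2 * c - x) - c\<bar> = \<bar>x - c\<bar>" for x :: real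
    by simp
  then show ?thesis
    using assms by (simp add: sets_sym_space sym_sets_def)
qed

lemma decision_rule_sets:
  "decision_rule (sym_space c) \<phi> \<Longrightarrow> {x. \<phi> x = d} \<in> sets (sym_space c)"
  unfolding decision_rule_def using measurable_sets[of \<phi> "sym_space c" "count_space UNIV" "{d}"]
  by (simp add: vimage_def)

lemma decision_rule_values:
  "decision_rule (sym_space c) \<phi> \<Longrightarrow> \<phi> x = 0 \<or> \<phi> x = 1"
  unfolding decision_rule_def by auto

lemma level_sets_sym_space:
  assumes "decision_rule (sym_space c) \<phi>"
  shows "{x. \<bar>x - c\<bar> < s \<and> \<phi> x = 1} \<in> sets (sym_space c)"
    and "{x. s < \<bar>x - c\<bar> \<and> \<phi> x = 0} \<in> sets (sym_space c)"
proof -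
  have "{x. \<bar>x - c\<bar> < s} \<in> sets (sym_space c)" "{x. s < \<bar>x - c\<bar>} \<in> sets (sym_space c)"
    by (intro sets_sym_space_abs_dist; measurable)+
  from this[THEN sets.Int, OF decision_rule_sets[OF assms]]
  show "{x. \<bar>x - c\<bar> < s \<and> \<phi> x = 1} \<in> sets (sym_space c)"
    and "{x. s < \<bar>x - c\<bar> \<and> \<phi> x = 0} \<in> sets (sym_space c)"
    by (simp_all add: Collect_conj_eq)
qed

lemma emeasure_gauss_sym:
  "S \<in> sets (sym_space c) \<Longrightarrow>
    emeasure (gauss_sym c \<theta>) S = emeasure (density lborel (normal_density \<theta> 1)) S"
  using emeasure_measure_of_subalgebra[of "density lborel (normal_density \<theta> 1)" "sym_sets c" S]
  by (simp add: gauss_sym_def sigma_algebra_sym_sets sym_sets_subset_borel sets_sym_space)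

lemma emeasure_leb_sym:
  "S \<in> sets (sym_space c) \<Longrightarrow> emeasure (leb_sym c) S = emeasure lborel S"
  using emeasure_measure_of_subalgebra[of lborel "sym_sets c" S]
  by (simp add: leb_sym_def sigma_algebra_sym_sets sym_sets_subset_borel sets_sym_space)

definition sym_normal_density :: "real \<Rightarrow> real \<Rightarrow> real \<Rightarrow> real" where
  "sym_normal_density c \<theta> x = (normal_density \<theta> 1 x + normal_density (2 * c - \<theta>) 1 x) / 2"

abbreviation sym_normal_prob :: "real \<Rightarrow> real \<Rightarrow> real set \<Rightarrow> real" where
  "sym_normal_prob c \<theta> S \<equiv> LINT x:S|lborel. sym_normal_density c \<theta> x"

lemma normal_density_reflect:
  "normal_density \<theta> 1 (2 * c - x) = normal_density (2 * c - \<theta>) 1 x"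
  unfolding normal_density_def by (simp add: power2_eq_square algebra_simps)

lemma normal_density_tilt:
  "normal_density \<theta> 1 x = normal_density c 1 x * exp (- ((\<theta> - c)\<^sup>2 / 2)) * exp ((\<theta> - c) * (x - c))"
proof -
  have "exp (- ((x - \<theta>)\<^sup>2 / (2 * 1\<^sup>2)))
      = exp (- ((x - c)\<^sup>2 / (2 * 1\<^sup>2))) * exp (- ((\<theta> - c)\<^sup>2 / 2)) * exp ((\<theta> - c) * (x - c))"
    unfolding mult_exp_exp by (rule arg_cong[where f = exp]) (simp add: power2_eq_square field_simps)
  then show ?thesis
    unfolding normal_density_def by simp
qed

lemma sym_normal_density_cosh:
  "sym_normal_density c \<theta> x = normal_density c 1 x * exp (- ((\<theta> - c)\<^sup>2 / 2)) * cosh ((\<theta> - c) * (x - c))"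
  using normal_density_tilt[of \<theta> x c] normal_density_tilt[of "2 * c - \<theta>" x c]
  by (simp add: sym_normal_density_def cosh_def power2_commute algebra_simps add_divide_distrib)

lemma sym_normal_density_pos: "0 < sym_normal_density c \<theta> x"
  unfolding sym_normal_density_def by (simp add: normal_density_pos add_pos_pos)

lemma set_integrable_sym_normal_density:
  "S \<in> sets borel \<Longrightarrow> set_integrable lborel S (sym_normal_density c \<theta>)"
  unfolding set_integrable_def sym_normal_density_def
  by (intro integrable_mult_indicator integrable_divide integrable_add) auto

lemma measure_gauss_sym:
  assumes "S \<in> sets (sym_space c)"
  shows "measure (gauss_sym c \<theta>) S = sym_normal_prob c \<theta> S"
proof -
  have S [measurable]: "S \<in> sets borel"
    using assms by (rule sets_sym_space_borel)
  have "measure (gauss_sym c \<theta>) S = measure (density lborel (normal_density \<theta> 1)) S"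
    using emeasure_gauss_sym[OF assms] by (simp add: measure_def)
  also have "\<dots> = integral\<^sup>L (density lborel (normal_density \<theta> 1)) (indicator S)"
    by simp
  also have "\<dots> = (LINT x:S|lborel. normal_density \<theta> 1 x)"
    unfolding set_lebesgue_integral_def by (subst integral_density) (auto simp: mult.commute)
  finally have measure_eq: "measure (gauss_sym c \<theta>) S = (LINT x:S|lborel. normal_density \<theta> 1 x)" .
  have "(LINT x:S|lborel. normal_density \<theta> 1 x)
      = (\<integral>x. indicator S (2 * c + -1 * x) * normal_density \<theta> 1 (2 * c + -1 * x) \<partial>lborel)"
    unfolding set_lebesgue_integral_def by (subst lborel_integral_real_affine[where c = "-1"]) auto
  also have "\<dots> = (LINT x:S|lborel. normal_density (2 * c - \<theta>) 1 x)"
    using sets_sym_space_reflect[OF assms]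
    by (simp add: set_lebesgue_integral_def normal_density_reflect indicator_def)
  finally have reflect:
    "(LINT x:S|lborel. normal_density \<theta> 1 x) = (LINT x:S|lborel. normal_density (2 * c - \<theta>) 1 x)" .
  have "set_integrable lborel S (normal_density \<theta>' 1)" for \<theta>'
    unfolding set_integrable_def by (intro integrable_mult_indicator) auto
  then show ?thesis
    using measure_eq reflect by (simp add: sym_normal_density_def)
qed

lemma sym_normal_density_ratio_mono:
  assumes "\<bar>\<theta>0 - c\<bar> \<le> \<bar>\<theta>1 - c\<bar>" "\<bar>y - c\<bar> \<le> \<bar>x - c\<bar>"
  shows "sym_normal_density c \<theta>1 y * sym_normal_density c \<theta>0 x
    \<le> sym_normal_density c \<theta>1 x * sym_normal_density c \<theta>0 y"
proof -
  define k where "k = normal_density c 1 x * normal_density c 1 y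
    * exp (- ((\<theta>1 - c)\<^sup>2 / 2)) * exp (- ((\<theta>0 - c)\<^sup>2 / 2))"
  have "0 \<le> k"
    by (simp add: k_def normal_density_nonneg)
  then have "k * (cosh ((\<theta>1 - c) * (y - c)) * cosh ((\<theta>0 - c) * (x - c)))
      \<le> k * (cosh ((\<theta>1 - c) * (x - c)) * cosh ((\<theta>0 - c) * (y - c)))"
    by (rule mult_left_mono[OF cosh_mult_cosh_le_swap[OF assms]])
  then show ?thesis
    by (simp add: sym_normal_density_cosh k_def ac_simps)
qed

lemma sym_normal_density_ratio_strict_mono:
  assumes "\<theta> \<noteq> c" "\<bar>y - c\<bar> < \<bar>x - c\<bar>"
  shows "sym_normal_density c \<theta> y * sym_normal_density c c x
    < sym_normal_density c \<theta> x * sym_normal_density c c y"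
proof -
  define k where "k = normal_density c 1 x * normal_density c 1 y * exp (- ((\<theta> - c)\<^sup>2 / 2))"
  have "0 < k"
    by (simp add: k_def normal_density_pos)
  moreover have "cosh ((\<theta> - c) * (y - c)) < cosh ((\<theta> - c) * (x - c))"
    using assms by (simp add: cosh_mult_abs[of "\<theta> - c"] cosh_real_nonneg_less_iff)
  ultimately have "k * cosh ((\<theta> - c) * (y - c)) < k * cosh ((\<theta> - c) * (x - c))"
    by simp
  then show ?thesis
    by (simp add: sym_normal_density_cosh k_def ac_simps)
qed

lemma sym_normal_density_threshold:
  assumes "\<bar>\<theta>0 - c\<bar> \<le> \<bar>\<theta>1 - c\<bar>" "0 \<le> r"
  obtains K where
    "\<And>x. r \<le> \<bar>x - c\<bar> \<Longrightarrow> K * sym_normal_density c \<theta>0 x \<le> sym_normal_density c \<theta>1 x"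
    "\<And>x. \<bar>x - c\<bar> \<le> r \<Longrightarrow> sym_normal_density c \<theta>1 x \<le> K * sym_normal_density c \<theta>0 x"
proof
  let ?h0 = "sym_normal_density c \<theta>0" and ?h1 = "sym_normal_density c \<theta>1"
  have pos: "0 < ?h0 (c + r)"
    by (rule sym_normal_density_pos)
  fix x
  show "?h1 (c + r) / ?h0 (c + r) * ?h0 x \<le> ?h1 x" if "r \<le> \<bar>x - c\<bar>"
    using sym_normal_density_ratio_mono[OF assms(1), of "c + r" x] that assms(2) pos
    by (simp add: pos_divide_le_eq mult.commute)
  show "?h1 x \<le> ?h1 (c + r) / ?h0 (c + r) * ?h0 x" if "\<bar>x - c\<bar> \<le> r"
    using sym_normal_density_ratio_mono[OF assms(1), of x "c + r"] that assms(2) pos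
    by (simp add: pos_le_divide_eq mult.commute)
qed

lemma sym_normal_density_threshold_strict:
  assumes "\<theta> \<noteq> c" "0 \<le> s"
  obtains K where
    "\<And>x. \<bar>x - c\<bar> < s \<Longrightarrow> sym_normal_density c \<theta> x < K * sym_normal_density c c x"
    "\<And>x. s < \<bar>x - c\<bar> \<Longrightarrow> K * sym_normal_density c c x < sym_normal_density c \<theta> x"
proof
  let ?h0 = "sym_normal_density c c" and ?h1 = "sym_normal_density c \<theta>"
  have pos: "0 < ?h0 (c + s)"
    by (rule sym_normal_density_pos)
  fix x
  show "?h1 x < ?h1 (c + s) / ?h0 (c + s) * ?h0 x" if "\<bar>x - c\<bar> < s"
    using sym_normal_density_ratio_strict_mono[OF assms(1), of x "c + s"] that assms(2) pos
    by (simp add: pos_less_divide_eq mult.commute)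
  show "?h1 (c + s) / ?h0 (c + s) * ?h0 x < ?h1 x" if "s < \<bar>x - c\<bar>"
    using sym_normal_density_ratio_strict_mono[OF assms(1), of "c + s" x] that assms(2) pos
    by (simp add: pos_divide_less_eq mult.commute)
qed

lemma gauss_sym_ratio_le_iff:
  assumes C: "C \<in> sets (sym_space c)" and E: "E \<in> sets (sym_space c)"
    and null: "emeasure lborel C \<noteq> 0"
  shows "measure (gauss_sym c \<theta>0) (C \<inter> E) / measure (gauss_sym c \<theta>0) C
      \<le> measure (gauss_sym c \<theta>1) (C \<inter> E) / measure (gauss_sym c \<theta>1) C
    \<longleftrightarrow> sym_normal_prob c \<theta>0 (C \<inter> E) * sym_normal_prob c \<theta>1 (C - E)
      \<le> sym_normal_prob c \<theta>1 (C \<inter> E) * sym_normal_prob c \<theta>0 (C - E)"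
proof -
  have borel: "C \<in> sets borel" "C \<inter> E \<in> sets borel" "C - E \<in> sets borel"
    using C E by (auto intro: sets_sym_space_borel)
  have split: "measure (gauss_sym c \<theta>) C
      = sym_normal_prob c \<theta> (C \<inter> E) + sym_normal_prob c \<theta> (C - E)"
    for \<theta>
    using measure_gauss_sym[OF C] set_integral_Un[of "C \<inter> E" "C - E" lborel "sym_normal_density c \<theta>"]
      set_integrable_sym_normal_density[OF borel(2)] set_integrable_sym_normal_density[OF borel(3)]
    by (simp add: Int_Diff_Un Int_Diff_disjoint)
  have "0 < measure (gauss_sym c \<theta>) C" for \<theta>
    using measure_gauss_sym[OF C] null borel(1)
    by (simp add: set_integral_pos set_integrable_sym_normal_density sym_normal_density_pos)
  then show ?thesis
    using measure_gauss_sym[OF sets.Int[OF C E]] divide_add_le_divide_add_iff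
    by (simp add: split)
qed

lemma g_rule_cross_le:
  assumes "0 \<le> t" and ae: "AE x in lborel. \<phi> x = g_rule c t x"
    and closer: "\<bar>\<theta>0 - c\<bar> \<le> \<bar>\<theta>1 - c\<bar>"
    and A: "A \<in> sets borel" "\<And>x. x \<in> A \<Longrightarrow> \<phi> x = 1"
    and B: "B \<in> sets borel" "\<And>x. x \<in> B \<Longrightarrow> \<phi> x \<noteq> 1"
  shows "sym_normal_prob c \<theta>0 A * sym_normal_prob c \<theta>1 B
    \<le> sym_normal_prob c \<theta>1 A * sym_normal_prob c \<theta>0 B"
proof (cases t)
  case PInf
  have "AE x in lborel. indicator A x * sym_normal_density c \<theta>0 x = 0"
    using ae by eventually_elim (auto simp: g_rule_def PInf indicator_def dest: A(2))
  then have "sym_normal_prob c \<theta>0 A = 0"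
    unfolding set_lebesgue_integral_def by (simp add: integral_eq_zero_AE)
  then show ?thesis
    by (simp add: set_integral_nonneg sym_normal_density_pos less_imp_le)
next
  case (real r)
  with \<open>0 \<le> t\<close> have "0 \<le> r"
    by simp
  obtain K where K:
    "\<And>x. r \<le> \<bar>x - c\<bar> \<Longrightarrow> K * sym_normal_density c \<theta>0 x \<le> sym_normal_density c \<theta>1 x"
    "\<And>x. \<bar>x - c\<bar> \<le> r \<Longrightarrow> sym_normal_density c \<theta>1 x \<le> K * sym_normal_density c \<theta>0 x"
    using sym_normal_density_threshold[OF closer \<open>0 \<le> r\<close>] by blast
  show ?thesis
  proof (rule set_integral_cross_le)
    show "AE x \<in> A in lborel. K * sym_normal_density c \<theta>0 x \<le> sym_normal_density c \<theta>1 x"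
      using ae by eventually_elim (auto simp: g_rule_def real dest: A(2) intro: K(1) split: if_splits)
    show "AE x \<in> B in lborel. sym_normal_density c \<theta>1 x \<le> K * sym_normal_density c \<theta>0 x"
      using ae by eventually_elim (auto simp: g_rule_def real dest: B(2) intro: K(2) split: if_splits)
  qed (auto simp: A(1) B(1) set_integrable_sym_normal_density sym_normal_density_pos less_imp_le)
next
  case MInf
  with \<open>0 \<le> t\<close> show ?thesis
    by simp
qed

lemma expert_if_ae_g_rule:
  assumes dr: "decision_rule (sym_space c) \<phi>" and "0 \<le> t"
    and ae: "AE x in lborel. \<phi> x = g_rule c t x"
    and closer: "\<And>\<theta>0 \<theta>1. \<theta>0 \<in> \<Theta>0 \<Longrightarrow> \<theta>1 \<in> \<Theta>1 \<Longrightarrow> \<bar>\<theta>0 - c\<bar> \<le> \<bar>\<theta>1 - c\<bar>"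
  shows "expert (sym_space c) (leb_sym c) (gauss_sym c) \<Theta>0 \<Theta>1 \<phi>"
  unfolding expert_def
proof (intro conjI dr ballI impI)
  fix \<theta>0 \<theta>1 C
  assume \<theta>: "\<theta>0 \<in> \<Theta>0" "\<theta>1 \<in> \<Theta>1" and C: "C \<in> sets (sym_space c)"
    and "emeasure (leb_sym c) C \<noteq> 0"
  then have null: "emeasure lborel C \<noteq> 0"
    by (simp add: emeasure_leb_sym)
  define E where "E = {x. \<phi> x = 1}"
  have E: "E \<in> sets (sym_space c)"
    unfolding E_def using dr by (rule decision_rule_sets)
  have "C \<inter> E \<in> sets borel" "C - E \<in> sets borel"
    using C E by (auto intro: sets_sym_space_borel)
  then have "sym_normal_prob c \<theta>0 (C \<inter> E) * sym_normal_prob c \<theta>1 (C - E)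
      \<le> sym_normal_prob c \<theta>1 (C \<inter> E) * sym_normal_prob c \<theta>0 (C - E)"
    by (intro g_rule_cross_le[OF \<open>0 \<le> t\<close> ae closer[OF \<theta>]]) (auto simp: E_def)
  then show "measure (gauss_sym c \<theta>0) (C \<inter> {x \<in> space (sym_space c). \<phi> x = 1}) / measure (gauss_sym c \<theta>0) C
      \<le> measure (gauss_sym c \<theta>1) (C \<inter> {x \<in> space (sym_space c). \<phi> x = 1}) / measure (gauss_sym c \<theta>1) C"
    using gauss_sym_ratio_le_iff[OF C E null] by (simp add: E_def)
qed

lemma expert_cross_le:
  assumes ex: "expert (sym_space c) (leb_sym c) (gauss_sym c) \<Theta>0 \<Theta>1 \<phi>"
    and \<theta>: "\<theta>0 \<in> \<Theta>0" "\<theta>1 \<in> \<Theta>1"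
    and A: "A \<in> sets (sym_space c)" "\<And>x. x \<in> A \<Longrightarrow> \<phi> x = 1" "emeasure lborel A \<noteq> 0"
    and B: "B \<in> sets (sym_space c)" "\<And>x. x \<in> B \<Longrightarrow> \<phi> x \<noteq> 1"
  shows "sym_normal_prob c \<theta>0 A * sym_normal_prob c \<theta>1 B \<le> sym_normal_prob c \<theta>1 A * sym_normal_prob c \<theta>0 B"
proof -
  define E where "E = {x. \<phi> x = 1}"
  have E: "E \<in> sets (sym_space c)"
    unfolding E_def using ex by (simp add: expert_def decision_rule_sets)
  have C: "A \<union> B \<in> sets (sym_space c)"
    using A(1) B(1) by (rule sets.Un)
  have split: "(A \<union> B) \<inter> E = A" "(A \<union> B) - E = B"
    using A(2) B(2) by (auto simp: E_def)
  have "emeasure lborel A \<le> emeasure lborel (A \<union> B)"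
    using sets_sym_space_borel[OF C] by (intro emeasure_mono) auto
  with A(3) have C_null: "emeasure lborel (A \<union> B) \<noteq> 0"
    by (auto simp: zero_less_iff_neq_zero[symmetric])
  then have "emeasure (leb_sym c) (A \<union> B) \<noteq> 0"
    by (simp add: emeasure_leb_sym C)
  then have "measure (gauss_sym c \<theta>0) ((A \<union> B) \<inter> E) / measure (gauss_sym c \<theta>0) (A \<union> B)
      \<le> measure (gauss_sym c \<theta>1) ((A \<union> B) \<inter> E) / measure (gauss_sym c \<theta>1) (A \<union> B)"
    using ex \<theta> C unfolding expert_def E_def by auto
  then show ?thesis
    using gauss_sym_ratio_le_iff[OF C E C_null] by (simp add: split)
qed

lemma expert_level_dichotomy:
  assumes ex: "expert (sym_space c) (leb_sym c) (gauss_sym c) \<Theta>0 \<Theta>1 \<phi>"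
    and \<theta>: "c \<in> \<Theta>0" "\<theta> \<in> \<Theta>1" "\<theta> \<noteq> c"
  shows "emeasure lborel {x. \<bar>x - c\<bar> < s \<and> \<phi> x = 1} = 0
    \<or> emeasure lborel {x. s < \<bar>x - c\<bar> \<and> \<phi> x = 0} = 0"
proof (rule ccontr)
  define A where "A = {x. \<bar>x - c\<bar> < s \<and> \<phi> x = 1}"
  define B where "B = {x. s < \<bar>x - c\<bar> \<and> \<phi> x = 0}"
  assume "\<not> ?thesis"
  then have null: "emeasure lborel A \<noteq> 0" "emeasure lborel B \<noteq> 0"
    by (simp_all add: A_def B_def)
  obtain x where "x \<in> A"
    using null(1) by (metis emeasure_empty equals0I)
  then have "0 \<le> s"
    by (auto simp: A_def abs_less_iff)
  have "decision_rule (sym_space c) \<phi>"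
    using ex by (simp add: expert_def)
  then have A: "A \<in> sets (sym_space c)" and B: "B \<in> sets (sym_space c)"
    unfolding A_def B_def by (rule level_sets_sym_space)+
  have borel: "A \<in> sets borel" "B \<in> sets borel"
    using A B by (auto intro: sets_sym_space_borel)
  have expert_ineq: "sym_normal_prob c c A * sym_normal_prob c \<theta> B \<le> sym_normal_prob c \<theta> A * sym_normal_prob c c B"
    using expert_cross_le[OF ex \<theta>(1,2) A _ null(1) B] by (auto simp: A_def B_def)
  obtain K where K:
    "\<And>x. \<bar>x - c\<bar> < s \<Longrightarrow> sym_normal_density c \<theta> x < K * sym_normal_density c c x"
    "\<And>x. s < \<bar>x - c\<bar> \<Longrightarrow> K * sym_normal_density c c x < sym_normal_density c \<theta> x"
    using sym_normal_density_threshold_strict[OF \<theta>(3) \<open>0 \<le> s\<close>] by blast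
  have "sym_normal_prob c \<theta> A * sym_normal_prob c c B < sym_normal_prob c c A * sym_normal_prob c \<theta> B"
  proof (rule set_integral_cross_less)
    show "AE x \<in> A in lborel. sym_normal_density c \<theta> x \<le> K * sym_normal_density c c x"
      by (auto simp: A_def intro: less_imp_le K(1))
    show "K * sym_normal_density c c x < sym_normal_density c \<theta> x" if "x \<in> B" for x
      using that by (auto simp: B_def intro: K(2))
  qed (auto simp: borel null set_integrable_sym_normal_density sym_normal_density_pos
      less_imp_le set_integral_pos)
  with expert_ineq show False
    by simp
qed

lemma ae_eq_g_rule_if_level_dichotomy:
  assumes dr: "decision_rule (sym_space c) \<phi>"
    and dichotomy: "\<And>s. emeasure lborel {x. \<bar>x - c\<bar> < s \<and> \<phi> x = 1} = 0
      \<or> emeasure lborel {x. s < \<bar>x - c\<bar> \<and> \<phi> x = 0} = 0"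
  shows "\<exists>t::ereal. 0 \<le> t \<and> (AE x in lborel. \<phi> x = g_rule c t x)"
proof -
  let ?A = "\<lambda>s. {x. \<bar>x - c\<bar> < s \<and> \<phi> x = 1}" and ?B = "\<lambda>s. {x. s < \<bar>x - c\<bar> \<and> \<phi> x = 0}"
  have borel: "?A s \<in> sets lborel" "?B s \<in> sets lborel" for s
    using level_sets_sym_space[OF dr] by (auto intro: sets_sym_space_borel)
  define t where "t = (SUP s \<in> {s. 0 \<le> s \<and> emeasure lborel (?A s) = 0}. ereal s)"
  have "0 \<le> t"
    unfolding t_def by (rule SUP_upper2[of 0]) auto
  have A_null: "emeasure lborel (?A s) = 0" if below: "ereal s < t" for s
  proof -
    obtain s' where s': "s' \<in> {s. 0 \<le> s \<and> emeasure lborel (?A s) = 0}" "ereal s < ereal s'"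
      using below[unfolded t_def less_SUP_iff] ..
    then have "emeasure lborel (?A s) \<le> emeasure lborel (?A s')"
      by (intro emeasure_mono borel) auto
    with s' show ?thesis
      by simp
  qed
  have B_null: "emeasure lborel (?B s) = 0" if "t < ereal s" for s
  proof -
    have "0 \<le> s"
      using order.strict_trans1[OF \<open>0 \<le> t\<close> that] by simp
    have "emeasure lborel (?A s) \<noteq> 0"
    proof
      assume "emeasure lborel (?A s) = 0"
      with \<open>0 \<le> s\<close> have "ereal s \<le> t"
        unfolding t_def by (intro SUP_upper) auto
      with that show False
        by simp
    qed
    then show ?thesis
      using dichotomy by blast
  qed
  have "AE x in lborel. \<forall>r::rat. (ereal (of_rat r) < t \<longrightarrow> x \<notin> ?A (of_rat r))
      \<and> (t < ereal (of_rat r) \<longrightarrow> x \<notin> ?B (of_rat r))"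
    using borel A_null B_null
    by (intro AE_all_countable[THEN iffD2] allI AE_conjI AE_impI AE_not_in null_setsI) auto
  moreover have "AE x in lborel. x \<notin> {c - real_of_ereal t, c + real_of_ereal t}"
    by (intro AE_not_in finite_imp_null_set_lborel) simp
  ultimately have "AE x in lborel. \<phi> x = g_rule c t x"
  proof eventually_elim
    case (elim x)
    then have "ereal \<bar>x - c\<bar> \<noteq> t"
      by (auto simp: abs_if split: if_splits)
    then consider "ereal \<bar>x - c\<bar> < t" | "t < ereal \<bar>x - c\<bar>"
      by (meson linorder_neqE)
    then show ?case
    proof cases
      case 1
      then obtain r :: rat where "\<bar>x - c\<bar> < of_rat r" "ereal (of_rat r) < t"
        using ereal_dense3 by fastforce
      then show ?thesis
        using 1 elim(1) decision_rule_values[OF dr, of x] by (auto simp: g_rule_def)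
    next
      case 2
      then obtain r :: rat where "t < ereal (of_rat r)" "of_rat r < \<bar>x - c\<bar>"
        using ereal_dense3 by fastforce
      then show ?thesis
        using 2 elim(1) decision_rule_values[OF dr, of x] by (auto simp: g_rule_def)
    qed
  qed
  with \<open>0 \<le> t\<close> show ?thesis
    by blast
qed

theorem corollary4p4:
  fixes c lam1 :: real and \<phi> :: "real \<Rightarrow> nat"
  assumes "lam1 \<ge> 0"
  shows "expert (sym_space c) (leb_sym c) (gauss_sym c)
           {c - lam1 .. c + lam1} ({..< c - lam1} \<union> {c + lam1 <..}) \<phi>
         \<longleftrightarrow> decision_rule (sym_space c) \<phi> \<and>
             (\<exists>t::ereal. 0 \<le> t \<and> (AE x in lborel. \<phi> x = g_rule c t x))"
proof
  assume ex: "expert (sym_space c) (leb_sym c) (gauss_sym c)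
    {c - lam1 .. c + lam1} ({..< c - lam1} \<union> {c + lam1 <..}) \<phi>"
  then have dr: "decision_rule (sym_space c) \<phi>"
    by (simp add: expert_def)
  have "c \<in> {c - lam1 .. c + lam1}" "c + lam1 + 1 \<in> {..< c - lam1} \<union> {c + lam1 <..}" "c + lam1 + 1 \<noteq> c"
    using assms by auto
  from expert_level_dichotomy[OF ex this]
  show "decision_rule (sym_space c) \<phi> \<and> (\<exists>t::ereal. 0 \<le> t \<and> (AE x in lborel. \<phi> x = g_rule c t x))"
    using dr ae_eq_g_rule_if_level_dichotomy by blast
next
  assume "decision_rule (sym_space c) \<phi> \<and> (\<exists>t::ereal. 0 \<le> t \<and> (AE x in lborel. \<phi> x = g_rule c t x))"
  then show "expert (sym_space c) (leb_sym c) (gauss_sym c)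
    {c - lam1 .. c + lam1} ({..< c - lam1} \<union> {c + lam1 <..}) \<phi>"
    by (auto intro!: expert_if_ae_g_rule)
qed

end
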